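(* Let $d\geq1$ and fix any $\alpha\in\mathbb{Z}^d$. Then $\big\|d+\sum_{j=1}^d z_j-\varepsilon z^\alpha\big\|_\infty<\big\|d+\sum_{j=1}^d z_j\big\|_\infty$ for every sufficiently small $\varepsilon>0$, where $\|\cdot\|_\infty$ is the supremum norm on $\mathbb{T}^d$.
   Context: $\mathbb{T}^d$ is the $d$-dimensional torus with coordinates $z=(z_1,\dots,z_d)$, and $z^\alpha=z_1^{\alpha_1}\cdots z_d^{\alpha_d}$. *)

theory Defs
  imports "HOL-Analysis.Analysis"
begin

text \<open>The d-dimensional torus, points represented as functions nat => complex;
  coordinates 0..d-1 are the unimodular coordinates z_1..z_d, all other coordinates are fixed to 1.\<close>
definition torus :: "nat \<Rightarrow> (nat \<Rightarrow> complex) set" where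
  "torus d = {z. (\<forall>j<d. cmod (z j) = 1) \<and> (\<forall>j\<ge>d. z j = 1)}"

definition monom_T :: "nat \<Rightarrow> (nat \<Rightarrow> int) \<Rightarrow> (nat \<Rightarrow> complex) \<Rightarrow> complex" where
  "monom_T d \<alpha> z = (\<Prod>j<d. z j powi \<alpha> j)"

definition sup_norm_T :: "nat \<Rightarrow> ((nat \<Rightarrow> complex) \<Rightarrow> complex) \<Rightarrow> real" where
  "sup_norm_T d f = (SUP z\<in>torus d. cmod (f z))"

end

theory Submission
  imports Defs
begin

text \<open>Write f = d + sum z_j, t = sqrt (sum |z_j - 1|^2) and K = sum |alpha_j|. The supremum
  of |f| on the torus is 2d, attained at z = 1. On the torus Re f = 2d - t^2/2 and
  |f|^2 <= 4d^2 - d t^2, so |f| is close to 2d only where t is small; there z^alpha is within K t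
  of 1, so subtracting eps z^alpha moves f towards the origin. Quantitatively,
  |f - eps z^alpha|^2 = |f|^2 - 2 eps Re (f conj(z^alpha)) + eps^2, and completing the square
  in t gives the uniform bound 4d^2 - (4d eps - eps^2 - 8d K^2 eps^2), which is below (2d)^2
  for small eps > 0.\<close>

lemma norm_power_int_minus_one_le:
  fixes z :: "'a::real_normed_field"
  assumes "norm z = 1"
  shows "norm (z powi k - 1) \<le> of_int \<bar>k\<bar> * norm (z - 1)"
proof (cases "k \<ge> 0")
  case True
  then have "z powi k = z ^ nat k" by (simp add: power_int_def)
  then show ?thesis
    using norm_power_diff[of z 1 "nat k"] assms True by simp
next
  case False
  have "z \<noteq> 0" using assms by auto
  then have "inverse z - 1 = (1 - z) / z" by (simp add: field_simps)
  then have "norm (inverse z - 1) = norm (z - 1)"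
    using assms by (simp add: norm_divide norm_minus_commute)
  moreover have "z powi k = inverse z ^ nat (- k)" using False by (simp add: power_int_def)
  moreover have "norm (inverse z) = 1" using assms by (simp add: norm_inverse)
  ultimately show ?thesis
    using norm_power_diff[of "inverse z" 1 "nat (- k)"] False by simp
qed

lemma Re_mult_cnj_ge: "Re f - cmod f * cmod (m - 1) \<le> Re (f * cnj m)"
proof -
  have "Re (f * cnj m) = Re f - Re (f * cnj (1 - m))" by (simp add: algebra_simps)
  moreover have "Re (f * cnj (1 - m)) \<le> cmod (f * cnj (1 - m))" by (rule complex_Re_le_cmod)
  moreover have "cmod (f * cnj (1 - m)) = cmod f * cmod (m - 1)"
    by (simp only: norm_mult complex_mod_cnj norm_minus_commute)
  ultimately show ?thesis by linarith
qed

lemma norm_diff_scaled_unit_squared: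
  assumes "cmod m = 1"
  shows "(cmod (f - of_real \<epsilon> * m))\<^sup>2 = (cmod f)\<^sup>2 - 2 * \<epsilon> * Re (f * cnj m) + \<epsilon>\<^sup>2"
proof -
  have "(Re m)\<^sup>2 + (Im m)\<^sup>2 = 1" using assms by (simp add: cmod_power2[symmetric])
  then show ?thesis unfolding cmod_power2 by simp algebra
qed

lemma cmod_minus_one_squared:
  assumes "cmod z = 1"
  shows "(cmod (z - 1))\<^sup>2 = 2 - 2 * Re z"
proof -
  have "(Re z)\<^sup>2 + (Im z)\<^sup>2 = 1" using assms by (simp add: cmod_power2[symmetric])
  then show ?thesis unfolding cmod_power2 by (simp add: power2_eq_square algebra_simps)
qed

lemma norm_perturbed_squared_le:
  fixes S m :: complex and d t K \<epsilon> :: real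
  assumes S: "cmod S \<le> d" and Re_S: "Re S = d - t\<^sup>2 / 2"
    and m: "cmod m = 1" and m_near_1: "cmod (m - 1) \<le> K * t"
    and \<epsilon>: "0 < \<epsilon>" "\<epsilon> \<le> d / 2"
  shows "(cmod (of_real d + S - of_real \<epsilon> * m))\<^sup>2 \<le> 4 * d\<^sup>2 - (4 * d * \<epsilon> - \<epsilon>\<^sup>2 - 8 * d * K\<^sup>2 * \<epsilon>\<^sup>2)"
proof -
  define f where "f = of_real d + S"
  have "0 \<le> d" using S norm_ge_zero order_trans by blast
  have f_squared: "(cmod f)\<^sup>2 \<le> 4 * d\<^sup>2 - d * t\<^sup>2"
  proof -
    have "(cmod S)\<^sup>2 \<le> d\<^sup>2" using S by (simp add: power_mono)
    moreover have "(cmod f)\<^sup>2 = d\<^sup>2 + 2 * d * Re S + (cmod S)\<^sup>2"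
      unfolding f_def cmod_power2 by (simp add: power2_eq_square algebra_simps)
    ultimately show ?thesis using Re_S by (simp add: power2_eq_square algebra_simps)
  qed
  have "cmod f \<le> 2 * d"
    unfolding f_def using S \<open>0 \<le> d\<close> norm_triangle_ineq[of "of_real d" S] by simp
  then have "cmod f * cmod (m - 1) \<le> 2 * d * (K * t)"
    using m_near_1 \<open>0 \<le> d\<close> by (intro mult_mono) auto
  then have Re_f_cnj_m: "2 * d - t\<^sup>2 / 2 - 2 * d * (K * t) \<le> Re (f * cnj m)"
    using Re_mult_cnj_ge[of f m] Re_S unfolding f_def by simp
  have "(cmod (f - of_real \<epsilon> * m))\<^sup>2 = (cmod f)\<^sup>2 - 2 * \<epsilon> * Re (f * cnj m) + \<epsilon>\<^sup>2"
    using m by (rule norm_diff_scaled_unit_squared)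
  also have "\<dots> \<le> 4 * d\<^sup>2 - d * t\<^sup>2 - 2 * \<epsilon> * (2 * d - t\<^sup>2 / 2 - 2 * d * (K * t)) + \<epsilon>\<^sup>2"
    using f_squared mult_left_mono[OF Re_f_cnj_m, of "2 * \<epsilon>"] \<epsilon> by linarith
  also have "\<dots> \<le> 4 * d\<^sup>2 - (4 * d * \<epsilon> - \<epsilon>\<^sup>2 - 8 * d * K\<^sup>2 * \<epsilon>\<^sup>2)"
  proof -
    have "(\<epsilon> - d) * t\<^sup>2 \<le> - (d / 2) * t\<^sup>2"
      using \<epsilon> by (intro mult_right_mono) auto
    moreover have "0 \<le> (d / 2) * (t - 4 * K * \<epsilon>)\<^sup>2"
      using \<open>0 \<le> d\<close> by simp
    ultimately show ?thesis by (simp add: power2_eq_square algebra_simps)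
  qed
  finally show ?thesis unfolding f_def .
qed

lemma one_in_torus: "(\<lambda>_. 1) \<in> torus d"
  by (simp add: torus_def)

lemma norm_torus_coordinate: "z \<in> torus d \<Longrightarrow> j < d \<Longrightarrow> cmod (z j) = 1"
  by (simp add: torus_def)

lemma norm_sum_torus_le:
  assumes "z \<in> torus d"
  shows "cmod (\<Sum>j<d. z j) \<le> real d"
proof -
  have "cmod (\<Sum>j<d. z j) \<le> (\<Sum>j<d. cmod (z j))" by (rule norm_sum)
  also have "\<dots> = real d" using assms by (simp add: norm_torus_coordinate)
  finally show ?thesis .
qed

lemma Re_sum_torus:
  assumes "z \<in> torus d"
  shows "Re (\<Sum>j<d. z j) = real d - (\<Sum>j<d. (cmod (z j - 1))\<^sup>2) / 2"
  using assms
  by (simp add: norm_torus_coordinate cmod_minus_one_squared Re_sum sum_subtractf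
      flip: sum_distrib_left) (simp add: field_simps)

lemma norm_monom_T:
  assumes "z \<in> torus d"
  shows "cmod (monom_T d \<alpha> z) = 1"
  using assms by (simp add: monom_T_def prod_norm[symmetric] norm_power_int norm_torus_coordinate)

lemma norm_monom_T_minus_one_le:
  assumes z: "z \<in> torus d"
  shows "cmod (monom_T d \<alpha> z - 1)
    \<le> (\<Sum>j<d. of_int \<bar>\<alpha> j\<bar>) * sqrt (\<Sum>j<d. (cmod (z j - 1))\<^sup>2)"
proof -
  define t where "t = sqrt (\<Sum>j<d. (cmod (z j - 1))\<^sup>2)"
  have coordinate_le: "cmod (z j - 1) \<le> t" if "j < d" for j
  proof -
    have "(cmod (z j - 1))\<^sup>2 \<le> (\<Sum>j<d. (cmod (z j - 1))\<^sup>2)"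
      by (rule member_le_sum) (use that in auto)
    then show ?thesis unfolding t_def by (simp add: real_le_rsqrt)
  qed
  have "cmod (monom_T d \<alpha> z - 1) = cmod ((\<Prod>j<d. z j powi \<alpha> j) - (\<Prod>j<d. 1))"
    by (simp add: monom_T_def)
  also have "\<dots> \<le> (\<Sum>j<d. cmod (z j powi \<alpha> j - 1))"
    using z by (intro norm_prod_diff) (auto simp: norm_power_int norm_torus_coordinate)
  also have "\<dots> \<le> (\<Sum>j<d. of_int \<bar>\<alpha> j\<bar> * t)"
  proof (rule sum_mono)
    fix j assume "j \<in> {..<d}"
    then have j: "j < d" by simp
    have "cmod (z j powi \<alpha> j - 1) \<le> of_int \<bar>\<alpha> j\<bar> * cmod (z j - 1)"
      using z j by (intro norm_power_int_minus_one_le norm_torus_coordinate)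
    also have "\<dots> \<le> of_int \<bar>\<alpha> j\<bar> * t"
      using j by (intro mult_left_mono coordinate_le) auto
    finally show "cmod (z j powi \<alpha> j - 1) \<le> of_int \<bar>\<alpha> j\<bar> * t" .
  qed
  finally show ?thesis unfolding t_def by (simp add: sum_distrib_right)
qed

lemma norm_perturbed_on_torus_squared_le:
  fixes \<alpha> :: "nat \<Rightarrow> int"
  assumes z: "z \<in> torus d" and \<epsilon>: "0 < \<epsilon>" "\<epsilon> \<le> real d / 2"
  defines "K \<equiv> \<Sum>j<d. of_int \<bar>\<alpha> j\<bar>"
  shows "(cmod (of_nat d + (\<Sum>j<d. z j) - of_real \<epsilon> * monom_T d \<alpha> z))\<^sup>2
    \<le> 4 * (real d)\<^sup>2 - (4 * real d * \<epsilon> - \<epsilon>\<^sup>2 - 8 * real d * K\<^sup>2 * \<epsilon>\<^sup>2)"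
proof -
  define t where "t = sqrt (\<Sum>j<d. (cmod (z j - 1))\<^sup>2)"
  have "t\<^sup>2 = (\<Sum>j<d. (cmod (z j - 1))\<^sup>2)"
    unfolding t_def by (simp add: sum_nonneg)
  then have "Re (\<Sum>j<d. z j) = real d - t\<^sup>2 / 2"
    using Re_sum_torus[OF z] by simp
  then show ?thesis
    using norm_perturbed_squared_le[OF norm_sum_torus_le[OF z] _ norm_monom_T[OF z]
        norm_monom_T_minus_one_le[OF z] \<epsilon>]
    unfolding K_def t_def by simp
qed

lemma sup_norm_T_le:
  assumes "\<And>z. z \<in> torus d \<Longrightarrow> cmod (f z) \<le> B"
  shows "sup_norm_T d f \<le> B"
  unfolding sup_norm_T_def using one_in_torus assms by (intro cSUP_least) auto

lemma sup_norm_T_perturbed_le: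
  fixes \<alpha> :: "nat \<Rightarrow> int"
  assumes \<epsilon>: "0 < \<epsilon>" "\<epsilon> \<le> real d / 2"
  defines "K \<equiv> \<Sum>j<d. of_int \<bar>\<alpha> j\<bar>"
  shows "sup_norm_T d (\<lambda>z. of_nat d + (\<Sum>j<d. z j) - of_real \<epsilon> * monom_T d \<alpha> z)
    \<le> sqrt (4 * (real d)\<^sup>2 - (4 * real d * \<epsilon> - \<epsilon>\<^sup>2 - 8 * real d * K\<^sup>2 * \<epsilon>\<^sup>2))"
  using norm_perturbed_on_torus_squared_le[OF _ \<epsilon>] unfolding K_def
  by (intro sup_norm_T_le real_le_rsqrt)

lemma sup_norm_T_unperturbed: "sup_norm_T d (\<lambda>z. of_nat d + (\<Sum>j<d. z j)) = 2 * real d"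
proof (rule antisym)
  have bound: "cmod (of_nat d + (\<Sum>j<d. z j)) \<le> 2 * real d" if "z \<in> torus d" for z
    using norm_triangle_ineq[of "of_nat d" "\<Sum>j<d. z j"] norm_sum_torus_le[OF that] by simp
  then show "sup_norm_T d (\<lambda>z. of_nat d + (\<Sum>j<d. z j)) \<le> 2 * real d"
    by (rule sup_norm_T_le)
  have "bdd_above ((\<lambda>z. cmod (of_nat d + (\<Sum>j<d. z j))) ` torus d)"
    using bound by (intro bdd_aboveI2)
  then have "cmod (of_nat d + (\<Sum>j<d. (\<lambda>_. 1::complex) j)) \<le> sup_norm_T d (\<lambda>z. of_nat d + (\<Sum>j<d. z j))"
    unfolding sup_norm_T_def by (intro cSUP_upper one_in_torus)
  then show "2 * real d \<le> sup_norm_T d (\<lambda>z. of_nat d + (\<Sum>j<d. z j))"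
    by simp
qed

lemma eventually_perturbation_gain_pos:
  fixes d K :: real
  assumes "d > 0"
  shows "\<forall>\<^sub>F \<epsilon> in at_right 0. 0 < \<epsilon> \<and> \<epsilon> \<le> d / 2 \<and> 0 < 4 * d * \<epsilon> - \<epsilon>\<^sup>2 - 8 * d * K\<^sup>2 * \<epsilon>\<^sup>2"
proof -
  define c where "c = 1 + 8 * d * K\<^sup>2"
  have "c > 0" unfolding c_def using assms by (simp add: add_pos_nonneg)
  then have "min (d / 2) (4 * d / c) > 0" using assms by simp
  moreover have "0 < \<epsilon> \<and> \<epsilon> \<le> d / 2 \<and> 0 < 4 * d * \<epsilon> - \<epsilon>\<^sup>2 - 8 * d * K\<^sup>2 * \<epsilon>\<^sup>2"
    if "\<epsilon> \<in> {0<..<min (d / 2) (4 * d / c)}" for \<epsilon>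
  proof -
    have \<epsilon>: "0 < \<epsilon>" "\<epsilon> \<le> d / 2" "\<epsilon> * c < 4 * d"
      using that \<open>c > 0\<close> by (auto simp: pos_less_divide_eq)
    have "4 * d * \<epsilon> - \<epsilon>\<^sup>2 - 8 * d * K\<^sup>2 * \<epsilon>\<^sup>2 = \<epsilon> * (4 * d - \<epsilon> * c)"
      unfolding c_def by (simp add: power2_eq_square algebra_simps)
    with \<epsilon> show ?thesis by simp
  qed
  ultimately show ?thesis
    using eventually_at_right_real by (blast intro: eventually_mono)
qed

theorem lemma2p3:
  fixes d :: nat and \<alpha> :: "nat \<Rightarrow> int"
  assumes "d \<ge> 1"
  shows "\<forall>\<^sub>F \<epsilon> in at_right (0::real).
           sup_norm_T d (\<lambda>z. of_nat d + (\<Sum>j<d. z j) - complex_of_real \<epsilon> * monom_T d \<alpha> z)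
           < sup_norm_T d (\<lambda>z. of_nat d + (\<Sum>j<d. z j))"
proof -
  define K where "K = (\<Sum>j<d. of_int \<bar>\<alpha> j\<bar> :: real)"
  have "real d > 0" using assms by simp
  from eventually_perturbation_gain_pos[OF this, of K]
  show ?thesis unfolding sup_norm_T_unperturbed
  proof (rule eventually_mono)
    fix \<epsilon> :: real
    define \<eta> where "\<eta> = 4 * real d * \<epsilon> - \<epsilon>\<^sup>2 - 8 * real d * K\<^sup>2 * \<epsilon>\<^sup>2"
    assume \<epsilon>: "0 < \<epsilon> \<and> \<epsilon> \<le> real d / 2 \<and> 0 < \<eta>"
    then have "sqrt (4 * (real d)\<^sup>2 - \<eta>) < sqrt (4 * (real d)\<^sup>2)" by simp
    also have "\<dots> = 2 * real d" by (simp add: real_sqrt_mult)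
    finally have "sqrt (4 * (real d)\<^sup>2 - \<eta>) < 2 * real d" .
    with sup_norm_T_perturbed_le[of \<epsilon> d \<alpha>, folded K_def] \<epsilon>
    show "sup_norm_T d (\<lambda>z. of_nat d + (\<Sum>j<d. z j) - of_real \<epsilon> * monom_T d \<alpha> z) < 2 * real d"
      unfolding \<eta>_def by auto
  qed
qed

end
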